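(* For any two POPs $p$ and $q$, $p+q\sim q+p$.
   Context: A partially ordered pattern (POP) $p$ of size $k$ is a partial order $\le_p$ on $[k]=\{1,\dots,k\}$. A permutation $\pi=\pi_1\cdots\pi_n$ contains $p$ if there are indices $i_1<\dots<i_k$ with $\pi_{i_j}<\pi_{i_m}$ whenever $j<_p m$; otherwise it avoids $p$. $\mathfrak S_n(p)$ is the set of permutations of $[n]$ avoiding $p$, and $p\sim q$ (Wilf-equivalence) means $|\mathfrak S_n(p)|=|\mathfrak S_n(q)|$ for all $n\ge 1$. For a POP $p$ of size $k$ and a POP $q$ of size $l$, the disjoint sum $p+q$ is the POP of size $k+l$ on $[k+l]$ in which $i\le j$ for $i,j\in[k]$ iff $i\le_p j$, $k+i\le k+j$ for $i,j\in[l]$ iff $i\le_q j$, and no element of $[k]$ is comparable with an element of $[k+1,k+l]$. *)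

theory Defs
  imports Main
begin

text \<open>A POP of size k is represented as a pair (k, P), where P is the (reflexive)
  partial order relation on {1..k}, given as a set of pairs.\<close>
type_synonym pop = "nat \<times> (nat \<times> nat) set"

definition is_POP :: "pop \<Rightarrow> bool" where
  "is_POP p \<longleftrightarrow> snd p \<subseteq> {1..fst p} \<times> {1..fst p} \<and> partial_order_on {1..fst p} (snd p)"

definition perms :: "nat \<Rightarrow> nat list set" where
  "perms n = {\<pi>. distinct \<pi> \<and> set \<pi> = {1..n}}"

text \<open>pi contains p: there are positions idx 1 < ... < idx k (0-based list positions)
  such that pi at idx j is less than pi at idx m whenever j is strictly below m in p.\<close>
definition contains :: "nat list \<Rightarrow> pop \<Rightarrow> bool" where
  "contains \<pi> p \<longleftrightarrow> (\<exists>idx :: nat \<Rightarrow> nat.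
      strict_mono_on {1..fst p} idx \<and> (\<forall>j\<in>{1..fst p}. idx j < length \<pi>) \<and>
      (\<forall>j m. (j, m) \<in> snd p \<and> j \<noteq> m \<longrightarrow> \<pi> ! idx j < \<pi> ! idx m))"

definition avoiders :: "nat \<Rightarrow> pop \<Rightarrow> nat list set" where
  "avoiders n p = {\<pi> \<in> perms n. \<not> contains \<pi> p}"

definition wilf_equiv :: "pop \<Rightarrow> pop \<Rightarrow> bool" where
  "wilf_equiv p q \<longleftrightarrow> (\<forall>n\<ge>1. card (avoiders n p) = card (avoiders n q))"

definition disjoint_sum :: "pop \<Rightarrow> pop \<Rightarrow> pop" where
  "disjoint_sum p q = (fst p + fst q,
     snd p \<union> {(fst p + i, fst p + j) | i j. (i, j) \<in> snd q})"

end

theory Submission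
  imports Defs
begin

(* Let P i mean that the first i entries of a permutation \<pi> of [n] contain p, and Q i that the
   remaining entries contain q. P is monotone and Q antitone in i, and \<pi> contains p + q iff P i and
   Q i hold for a common i. Comparing the intervals on which P and Q fail gives, for each \<pi>,

     [\<pi> avoids p + q] + #{i \<le> n. \<not> P i \<and> \<not> Q i}
       = [\<pi> avoids p] + [\<pi> avoids q] + #{i < n. \<not> P i \<and> \<not> Q (i + 1)}.

   Summing over \<pi>, the sums count permutations whose prefix avoids p and whose suffix (possibly
   after one skipped entry) avoids q. Once the values of the prefix are chosen, prefix and suffix can
   be standardised independently, so with C n = (\<Sum>i\<le>n. (n choose i) * |Av_i(p)| * |Av_(n-i)(q)|)

     |Av_n(p + q)| + C n = |Av_n(p)| + |Av_n(q)| + n * C (n - 1),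

   and the binomial convolution C is symmetric in p and q. *)

section \<open>Two counting identities\<close>

lemma of_bool_up_down_disjoint:
  fixes P Q :: "nat \<Rightarrow> bool"
  assumes up: "\<And>i j. i \<le> j \<Longrightarrow> P i \<Longrightarrow> P j" and down: "\<And>i j. i \<le> j \<Longrightarrow> Q j \<Longrightarrow> Q i"
    and "\<not> P 0" and "\<not> Q n"
  shows "(of_bool (\<not> (\<exists>i\<le>n. P i \<and> Q i)) :: nat) + (\<Sum>i\<le>n. of_bool (\<not> P i \<and> \<not> Q i))
       = of_bool (\<not> P n) + of_bool (\<not> Q 0) + (\<Sum>i<n. of_bool (\<not> P i \<and> \<not> Q (Suc i)))"
  using \<open>\<not> Q n\<close>
proof (induction n)
  case 0
  then show ?case using \<open>\<not> P 0\<close> by simp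
next
  case (Suc n)
  have last_sum: "(\<Sum>i\<le>Suc n. of_bool (\<not> P i \<and> \<not> Q i))
      = (\<Sum>i\<le>n. of_bool (\<not> P i \<and> \<not> Q i)) + of_bool (\<not> P (Suc n))"
    using Suc.prems by simp
  show ?case
  proof (cases "Q n")
    case False
    have ex: "(\<exists>i\<le>Suc n. P i \<and> Q i) \<longleftrightarrow> (\<exists>i\<le>n. P i \<and> Q i)"
      using Suc.prems by (auto simp: le_Suc_eq)
    have gap_sum: "(\<Sum>i<Suc n. of_bool (\<not> P i \<and> \<not> Q (Suc i)))
        = (\<Sum>i<n. of_bool (\<not> P i \<and> \<not> Q (Suc i))) + of_bool (\<not> P n)"
      using Suc.prems by simp
    show ?thesis
      unfolding ex gap_sum last_sum using Suc.IH[OF False] by linarith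
  next
    case True
    then have Q: "Q i" if "i \<le> n" for i
      using down that by blast
    have ex: "(\<exists>i\<le>Suc n. P i \<and> Q i) \<longleftrightarrow> P n"
    proof
      assume "\<exists>i\<le>Suc n. P i \<and> Q i"
      then obtain i where "i \<le> Suc n" "P i" "Q i" by blast
      with Suc.prems have "i \<le> n" by (cases "i = Suc n") auto
      with up \<open>P i\<close> show "P n" by blast
    qed (use True le_SucI in blast)
    have diagonal_sum: "(\<Sum>i\<le>n. of_bool (\<not> P i \<and> \<not> Q i)) = (0 :: nat)"
      using Q by (auto intro!: sum.neutral)
    have gap_sum: "(\<Sum>i<Suc n. of_bool (\<not> P i \<and> \<not> Q (Suc i))) = (of_bool (\<not> P n) :: nat)"
      using Q Suc.prems by (auto intro!: sum.neutral)
    show ?thesis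
      unfolding ex last_sum diagonal_sum gap_sum using Q[of 0] by simp
  qed
qed

definition binomial_convolution :: "(nat \<Rightarrow> nat) \<Rightarrow> (nat \<Rightarrow> nat) \<Rightarrow> nat \<Rightarrow> nat" where
  "binomial_convolution a b n = (\<Sum>i\<le>n. (n choose i) * a i * b (n - i))"

lemma binomial_convolution_commute:
  "binomial_convolution a b n = binomial_convolution b a n"
proof -
  have "(\<Sum>i\<le>n. (n choose i) * a i * b (n - i)) = (\<Sum>i\<le>n. (n choose (n - i)) * a (n - i) * b (n - (n - i)))"
    using sum.atLeastAtMost_rev[of "\<lambda>i. (n choose i) * a i * b (n - i)" 0 n]
    by (simp add: atMost_atLeast0)
  also have "\<dots> = (\<Sum>i\<le>n. (n choose i) * b i * a (n - i))"
    by (intro sum.cong) (auto simp: binomial_symmetric[symmetric] mult_ac)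
  finally show ?thesis
    unfolding binomial_convolution_def .
qed

section \<open>Order-invariant properties of arrangements\<close>

definition order_isomorphic :: "nat list \<Rightarrow> nat list \<Rightarrow> bool" where
  "order_isomorphic xs ys \<longleftrightarrow> length xs = length ys \<and>
     (\<forall>i<length xs. \<forall>j<length xs. xs ! i < xs ! j \<longleftrightarrow> ys ! i < ys ! j)"

definition order_invariant :: "(nat list \<Rightarrow> bool) \<Rightarrow> bool" where
  "order_invariant P \<longleftrightarrow> (\<forall>xs ys. order_isomorphic xs ys \<longrightarrow> P xs \<longrightarrow> P ys)"

lemma order_isomorphic_sym: "order_isomorphic xs ys \<Longrightarrow> order_isomorphic ys xs"
  unfolding order_isomorphic_def by auto

lemma order_isomorphic_take: "order_isomorphic xs ys \<Longrightarrow> order_isomorphic (take i xs) (take i ys)"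
  unfolding order_isomorphic_def by auto

lemma order_isomorphic_map: "strict_mono_on (set xs) f \<Longrightarrow> order_isomorphic xs (map f xs)"
  unfolding order_isomorphic_def by (auto simp: strict_mono_on_less)

lemma order_invariant_take: "order_invariant P \<Longrightarrow> order_invariant (\<lambda>xs. P (take i xs))"
  unfolding order_invariant_def using order_isomorphic_take by blast

lemma order_invariant_True: "order_invariant (\<lambda>_. True)"
  unfolding order_invariant_def by simp

definition arrangements :: "nat set \<Rightarrow> nat list set" where
  "arrangements T = {xs. distinct xs \<and> set xs = T}"

lemma perms_eq_arrangements: "perms n = arrangements {1..n}"
  unfolding perms_def arrangements_def ..

lemma length_arrangement: "xs \<in> arrangements T \<Longrightarrow> length xs = card T"
  unfolding arrangements_def using distinct_card by fastforce

lemma finite_arrangements: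
  assumes "finite T"
  shows "finite (arrangements T)"
proof -
  have "arrangements T \<subseteq> {xs. set xs \<subseteq> T \<and> length xs = card T}"
    using length_arrangement by (auto simp: arrangements_def)
  moreover have "finite {xs. set xs \<subseteq> T \<and> length xs = card T}"
    using finite_lists_length_eq[OF assms] by simp
  ultimately show ?thesis
    by (rule finite_subset)
qed

lemma append_in_arrangements_iff:
  "xs @ ys \<in> arrangements T \<longleftrightarrow>
    set xs \<subseteq> T \<and> xs \<in> arrangements (set xs) \<and> ys \<in> arrangements (T - set xs)"
  unfolding arrangements_def by auto

lemma card_arrangements_strict_mono_bij:
  assumes bij: "bij_betw f S T" and mono: "strict_mono_on S f" and P: "order_invariant P"
  shows "card {xs \<in> arrangements S. P xs} = card {ys \<in> arrangements T. P ys}"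
proof -
  define g where "g = inv_into S f"
  have gf: "g (f x) = x" if "x \<in> S" for x
    using bij_betw_inv_into_left[OF bij that] unfolding g_def .
  have fg: "f (g y) = y" if "y \<in> T" for y
    using bij_betw_inv_into_right[OF bij that] unfolding g_def .
  have g_bij: "bij_betw g T S"
    unfolding g_def by (rule bij_betw_inv_into[OF bij])
  have iso: "order_isomorphic xs (map f xs)" if "set xs \<subseteq> S" for xs
    using that mono order_isomorphic_map monotone_on_subset by blast
  show ?thesis
  proof (rule bij_betw_same_card[of "map f"], rule bij_betw_byWitness[where f'="map g"])
    show "map f ` {xs \<in> arrangements S. P xs} \<subseteq> {ys \<in> arrangements T. P ys}"
    proof (rule image_subsetI)
      fix xs assume xs: "xs \<in> {xs \<in> arrangements S. P xs}"
      then have "set (map f xs) = T" "distinct (map f xs)"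
        using bij unfolding arrangements_def bij_betw_def by (auto simp: distinct_map)
      moreover have "P (map f xs)"
        using P iso[of xs] xs unfolding order_invariant_def arrangements_def by blast
      ultimately show "map f xs \<in> {ys \<in> arrangements T. P ys}"
        unfolding arrangements_def by blast
    qed
    show "map g ` {ys \<in> arrangements T. P ys} \<subseteq> {xs \<in> arrangements S. P xs}"
    proof (rule image_subsetI)
      fix ys assume ys: "ys \<in> {ys \<in> arrangements T. P ys}"
      then have "map f (map g ys) = ys"
        using fg unfolding arrangements_def by (auto intro: map_idI)
      moreover have "set (map g ys) = S" "distinct (map g ys)"
        using ys g_bij unfolding arrangements_def bij_betw_def by (auto simp: distinct_map)
      ultimately have "order_isomorphic ys (map g ys)"
        using iso[of "map g ys"] order_isomorphic_sym by simp
      with \<open>set (map g ys) = S\<close> \<open>distinct (map g ys)\<close>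
      show "map g ys \<in> {xs \<in> arrangements S. P xs}"
        using P ys unfolding order_invariant_def arrangements_def by blast
    qed
  qed (auto simp: arrangements_def gf fg intro!: map_idI)
qed

definition rank_in :: "nat set \<Rightarrow> nat \<Rightarrow> nat" where
  "rank_in T x = card {y \<in> T. y \<le> x}"

lemma strict_mono_on_rank_in: "finite T \<Longrightarrow> strict_mono_on T (rank_in T)"
proof (rule strict_mono_onI)
  fix x y assume "finite T" "x \<in> T" "y \<in> T" "x < y"
  then have "{z \<in> T. z \<le> x} \<subset> {z \<in> T. z \<le> y}" by force
  with \<open>finite T\<close> show "rank_in T x < rank_in T y"
    unfolding rank_in_def by (intro psubset_card_mono) auto
qed

lemma bij_betw_rank_in:
  assumes "finite T"
  shows "bij_betw (rank_in T) T {1..card T}"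
proof -
  have inj: "inj_on (rank_in T) T"
    using strict_mono_on_imp_inj_on[OF strict_mono_on_rank_in[OF assms]] .
  have "rank_in T x \<in> {1..card T}" if "x \<in> T" for x
  proof -
    have "{y \<in> T. y \<le> x} \<noteq> {}" using that by blast
    with assms have "1 \<le> rank_in T x"
      unfolding rank_in_def by (simp add: Suc_le_eq card_gt_0_iff)
    moreover have "rank_in T x \<le> card T"
      unfolding rank_in_def using assms by (intro card_mono) auto
    ultimately show ?thesis by simp
  qed
  then have "rank_in T ` T \<subseteq> {1..card T}" by blast
  moreover have "card (rank_in T ` T) = card {1..card T}"
    using card_image[OF inj] by simp
  ultimately show ?thesis
    using inj card_subset_eq[of "{1..card T}"] unfolding bij_betw_def by simp
qed

lemma card_arrangements_eq_card_perms:
  assumes "finite T" "order_invariant P"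
  shows "card {xs \<in> arrangements T. P xs} = card {\<sigma> \<in> perms (card T). P \<sigma>}"
  unfolding perms_eq_arrangements
  using card_arrangements_strict_mono_bij[OF bij_betw_rank_in strict_mono_on_rank_in] assms by blast

lemma card_arrangements_split:
  assumes T: "finite T" and "i \<le> card T" and P: "order_invariant P" and Q: "order_invariant Q"
  shows "card {\<pi> \<in> arrangements T. P (take i \<pi>) \<and> Q (drop i \<pi>)}
       = (card T choose i) * card {\<sigma> \<in> perms i. P \<sigma>} * card {\<tau> \<in> perms (card T - i). Q \<tau>}"
proof -
  define subsets where "subsets = {S. S \<subseteq> T \<and> card S = i}"
  define parts where "parts S = {xs \<in> arrangements S. P xs} \<times> {ys \<in> arrangements (T - S). Q ys}" for S
  have split_parts: "length xs = i \<and> set xs = S"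
    if "S \<in> subsets" "(xs, ys) \<in> parts S" for S xs ys
    using that length_arrangement[of xs S] unfolding subsets_def parts_def arrangements_def by auto
  have "bij_betw (\<lambda>\<pi>. (set (take i \<pi>), take i \<pi>, drop i \<pi>))
      {\<pi> \<in> arrangements T. P (take i \<pi>) \<and> Q (drop i \<pi>)} (Sigma subsets parts)"
  proof (rule bij_betw_byWitness[where f'="\<lambda>(S, xs, ys). xs @ ys"])
    show "(\<lambda>\<pi>. (set (take i \<pi>), take i \<pi>, drop i \<pi>)) ` {\<pi> \<in> arrangements T. P (take i \<pi>) \<and> Q (drop i \<pi>)}
        \<subseteq> Sigma subsets parts"
    proof (rule image_subsetI)
      fix \<pi> assume \<pi>: "\<pi> \<in> {\<pi> \<in> arrangements T. P (take i \<pi>) \<and> Q (drop i \<pi>)}"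
      then have "take i \<pi> @ drop i \<pi> \<in> arrangements T" by simp
      moreover have "card (set (take i \<pi>)) = i"
        using \<pi> length_arrangement[of \<pi> T] \<open>i \<le> card T\<close>
        unfolding arrangements_def by (simp add: distinct_card)
      ultimately show "(set (take i \<pi>), take i \<pi>, drop i \<pi>) \<in> Sigma subsets parts"
        using \<pi> unfolding append_in_arrangements_iff subsets_def parts_def by simp
    qed
    show "(\<lambda>(S, xs, ys). xs @ ys) ` Sigma subsets parts
        \<subseteq> {\<pi> \<in> arrangements T. P (take i \<pi>) \<and> Q (drop i \<pi>)}"
      using split_parts unfolding subsets_def parts_def
      by (auto simp: append_in_arrangements_iff)
  qed (auto dest: split_parts)
  then have "card {\<pi> \<in> arrangements T. P (take i \<pi>) \<and> Q (drop i \<pi>)} = card (Sigma subsets parts)"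
    by (rule bij_betw_same_card)
  also have "\<dots> = (\<Sum>S\<in>subsets. card (parts S))"
    using T by (intro card_SigmaI) (auto simp: subsets_def parts_def finite_arrangements finite_subset)
  also have "\<dots> = (\<Sum>S\<in>subsets. card {\<sigma> \<in> perms i. P \<sigma>} * card {\<tau> \<in> perms (card T - i). Q \<tau>})"
  proof (rule sum.cong[OF refl])
    fix S assume "S \<in> subsets"
    then have "S \<subseteq> T" "card S = i" "finite S" unfolding subsets_def using T finite_subset by auto
    moreover have "card (T - S) = card T - i"
      using \<open>S \<subseteq> T\<close> \<open>card S = i\<close> \<open>finite S\<close> by (simp add: card_Diff_subset)
    ultimately show "card (parts S) = card {\<sigma> \<in> perms i. P \<sigma>} * card {\<tau> \<in> perms (card T - i). Q \<tau>}"
      unfolding parts_def card_cartesian_product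
      using card_arrangements_eq_card_perms P Q T by simp
  qed
  also have "\<dots> = (card T choose i) * card {\<sigma> \<in> perms i. P \<sigma>} * card {\<tau> \<in> perms (card T - i). Q \<tau>}"
    unfolding subsets_def using n_subsets[OF T] by simp
  finally show ?thesis .
qed

lemma arrangements_singleton: "arrangements {x} = {[x]}"
proof
  show "arrangements {x} \<subseteq> {[x]}"
  proof
    fix xs assume xs: "xs \<in> arrangements {x}"
    then have "length xs = 1" by (simp add: length_arrangement)
    then obtain y where "xs = [y]" by (cases xs) auto
    with xs show "xs \<in> {[x]}"
      unfolding arrangements_def by simp
  qed
qed (simp add: arrangements_def)

lemma card_perms_take:
  assumes "order_invariant P"
  shows "card {\<sigma> \<in> perms (Suc i). P (take i \<sigma>)} = Suc i * card {\<sigma> \<in> perms i. P \<sigma>}"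
proof -
  have "card {\<sigma> \<in> arrangements {1..Suc i}. P (take i \<sigma>) \<and> True}
      = (card {1..Suc i} choose i) * card {\<sigma> \<in> perms i. P \<sigma>} * card {\<tau> \<in> perms (card {1..Suc i} - i). True}"
    by (rule card_arrangements_split) (use assms order_invariant_True in auto)
  moreover have "perms 1 = {[1]}"
    by (simp add: perms_eq_arrangements arrangements_singleton)
  ultimately show ?thesis
    by (simp add: perms_eq_arrangements)
qed

section \<open>Occurrences of partially ordered patterns\<close>

definition occurrence :: "nat list \<Rightarrow> pop \<Rightarrow> (nat \<Rightarrow> nat) \<Rightarrow> bool" where
  "occurrence \<pi> p idx \<longleftrightarrow> strict_mono_on {1..fst p} idx \<and> (\<forall>j\<in>{1..fst p}. idx j < length \<pi>) \<and>
     (\<forall>j m. (j, m) \<in> snd p \<and> j \<noteq> m \<longrightarrow> \<pi> ! idx j < \<pi> ! idx m)"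

lemma contains_iff_occurrence: "contains \<pi> p \<longleftrightarrow> (\<exists>idx. occurrence \<pi> p idx)"
  by (simp add: contains_def occurrence_def)

lemma is_POP_relatedD:
  "is_POP p \<Longrightarrow> (j, m) \<in> snd p \<Longrightarrow> j \<in> {1..fst p} \<and> m \<in> {1..fst p}"
  unfolding is_POP_def by auto

lemma occurrence_cong:
  assumes "is_POP p" "\<And>j. j \<in> {1..fst p} \<Longrightarrow> f j = g j"
  shows "occurrence \<pi> p f \<longleftrightarrow> occurrence \<pi> p g"
proof -
  have "strict_mono_on {1..fst p} f \<longleftrightarrow> strict_mono_on {1..fst p} g"
    using assms(2) by (simp add: strict_mono_on_def)
  with assms show ?thesis
    unfolding occurrence_def by (metis is_POP_relatedD)
qed

lemma occurrence_order_isomorphic: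
  assumes "is_POP p" "order_isomorphic \<pi> \<sigma>" "occurrence \<pi> p idx"
  shows "occurrence \<sigma> p idx"
  using assms unfolding occurrence_def order_isomorphic_def by (metis is_POP_relatedD)

lemma order_invariant_avoid: "is_POP p \<Longrightarrow> order_invariant (\<lambda>\<pi>. \<not> contains \<pi> p)"
  unfolding order_invariant_def contains_iff_occurrence
  by (metis occurrence_order_isomorphic order_isomorphic_sym)

lemma occurrence_take_iff:
  assumes "is_POP p"
  shows "occurrence (take i \<pi>) p idx \<longleftrightarrow> occurrence \<pi> p idx \<and> (\<forall>j\<in>{1..fst p}. idx j < i)"
proof -
  have "take i \<pi> ! idx j = \<pi> ! idx j" if "j \<in> {1..fst p}" "\<forall>j\<in>{1..fst p}. idx j < i" for j
    using that by simp
  then have "(\<forall>j m. (j, m) \<in> snd p \<and> j \<noteq> m \<longrightarrow> take i \<pi> ! idx j < take i \<pi> ! idx m) \<longleftrightarrow>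
      (\<forall>j m. (j, m) \<in> snd p \<and> j \<noteq> m \<longrightarrow> \<pi> ! idx j < \<pi> ! idx m)"
    if "\<forall>j\<in>{1..fst p}. idx j < i"
    using that is_POP_relatedD[OF assms] by metis
  then show ?thesis
    unfolding occurrence_def by auto
qed

lemma occurrence_drop_iff:
  assumes "is_POP p"
  shows "occurrence (drop i \<pi>) p idx \<longleftrightarrow> occurrence \<pi> p (\<lambda>j. i + idx j)"
proof -
  have "drop i \<pi> ! idx j = \<pi> ! (i + idx j)"
    if "j \<in> {1..fst p}" "\<forall>j\<in>{1..fst p}. i + idx j < length \<pi>" for j
  proof -
    have "i \<le> length \<pi>" using that by fastforce
    then show ?thesis by simp
  qed
  then have "(\<forall>j m. (j, m) \<in> snd p \<and> j \<noteq> m \<longrightarrow> drop i \<pi> ! idx j < drop i \<pi> ! idx m) \<longleftrightarrow>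
      (\<forall>j m. (j, m) \<in> snd p \<and> j \<noteq> m \<longrightarrow> \<pi> ! (i + idx j) < \<pi> ! (i + idx m))"
    if "\<forall>j\<in>{1..fst p}. i + idx j < length \<pi>"
    using that is_POP_relatedD[OF assms] by metis
  moreover have "strict_mono_on {1..fst p} (\<lambda>j. i + idx j) \<longleftrightarrow> strict_mono_on {1..fst p} idx"
    by (simp add: strict_mono_on_def)
  moreover have "idx j < length (drop i \<pi>) \<longleftrightarrow> i + idx j < length \<pi>" for j
    by auto
  ultimately show ?thesis
    unfolding occurrence_def by auto
qed

lemma strict_mono_on_atLeastAtMost_add:
  fixes f :: "nat \<Rightarrow> 'a::order"
  shows "strict_mono_on {1..k + l} f \<longleftrightarrow> strict_mono_on {1..k} f \<and>
    strict_mono_on {1..l} (\<lambda>j. f (k + j)) \<and> (\<forall>j\<in>{1..k}. \<forall>m\<in>{1..l}. f j < f (k + m))"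
  (is "?lhs \<longleftrightarrow> ?left \<and> ?right \<and> ?cross")
proof
  assume ?lhs then show "?left \<and> ?right \<and> ?cross" by (auto simp: strict_mono_on_def)
next
  assume rhs: "?left \<and> ?right \<and> ?cross"
  show ?lhs
  proof (rule strict_mono_onI)
    fix r s assume rs: "r \<in> {1..k + l}" "s \<in> {1..k + l}" "r < s"
    consider "s \<le> k" | "r \<le> k" "k < s" | "k < r"
      using rs by linarith
    then show "f r < f s"
    proof cases
      case 1
      with rs have "r \<in> {1..k}" "s \<in> {1..k}" by auto
      with rhs strict_mono_onD[of "{1..k}" f r s] \<open>r < s\<close> show ?thesis by blast
    next
      case 2
      with rs have "r \<in> {1..k}" "s - k \<in> {1..l}" by auto
      with rhs have "f r < f (k + (s - k))" by blast
      with 2 show ?thesis by simp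
    next
      case 3
      with rs have "r - k \<in> {1..l}" "s - k \<in> {1..l}" "r - k < s - k" by auto
      then have "f (k + (r - k)) < f (k + (s - k))"
        using rhs strict_mono_onD[of "{1..l}" "\<lambda>j. f (k + j)"] by blast
      with 3 rs show ?thesis by simp
    qed
  qed
qed

lemma occurrence_disjoint_sum_iff:
  assumes "is_POP p" "is_POP q"
  shows "occurrence \<pi> (disjoint_sum p q) idx \<longleftrightarrow>
    occurrence \<pi> p idx \<and> occurrence \<pi> q (\<lambda>j. idx (fst p + j)) \<and>
    (\<forall>j\<in>{1..fst p}. \<forall>m\<in>{1..fst q}. idx j < idx (fst p + m))"
proof -
  let ?k = "fst p" and ?l = "fst q"
  have "{1..?k + ?l} = {1..?k} \<union> (\<lambda>j. ?k + j) ` {1..?l}"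
    by (auto simp: image_iff)
  then have bounds: "(\<forall>j\<in>{1..?k + ?l}. idx j < length \<pi>) \<longleftrightarrow>
      (\<forall>j\<in>{1..?k}. idx j < length \<pi>) \<and> (\<forall>j\<in>{1..?l}. idx (?k + j) < length \<pi>)"
    by (simp only: ball_Un ball_simps)
  have relations: "(\<forall>j m. (j, m) \<in> snd (disjoint_sum p q) \<and> j \<noteq> m \<longrightarrow> \<pi> ! idx j < \<pi> ! idx m) \<longleftrightarrow>
      (\<forall>j m. (j, m) \<in> snd p \<and> j \<noteq> m \<longrightarrow> \<pi> ! idx j < \<pi> ! idx m) \<and>
      (\<forall>j m. (j, m) \<in> snd q \<and> j \<noteq> m \<longrightarrow> \<pi> ! idx (?k + j) < \<pi> ! idx (?k + m))"
    by (auto simp: disjoint_sum_def)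
  have size: "fst (disjoint_sum p q) = ?k + ?l"
    by (simp add: disjoint_sum_def)
  show ?thesis
    unfolding occurrence_def size strict_mono_on_atLeastAtMost_add bounds relations by auto
qed

lemma contains_disjoint_sum_iff:
  assumes p: "is_POP p" and q: "is_POP q" and "1 \<le> fst p"
  shows "contains \<pi> (disjoint_sum p q) \<longleftrightarrow>
    (\<exists>i\<le>length \<pi>. contains (take i \<pi>) p \<and> contains (drop i \<pi>) q)"
proof
  let ?k = "fst p"
  assume "contains \<pi> (disjoint_sum p q)"
  then obtain idx where occ: "occurrence \<pi> p idx" "occurrence \<pi> q (\<lambda>j. idx (?k + j))"
    and cross: "\<forall>j\<in>{1..?k}. \<forall>m\<in>{1..fst q}. idx j < idx (?k + m)"
    unfolding contains_iff_occurrence occurrence_disjoint_sum_iff[OF p q] by blast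
  define i where "i = Suc (idx ?k)"
  have k: "?k \<in> {1..?k}" using \<open>1 \<le> fst p\<close> by simp
  then have "i \<le> length \<pi>"
    using occ(1) unfolding i_def occurrence_def by (simp add: Suc_le_eq)
  moreover have "idx j < i" if "j \<in> {1..?k}" for j
    using that k occ(1) strict_mono_on_leD[of "{1..?k}" idx j ?k]
    unfolding i_def occurrence_def by (auto simp: less_Suc_eq_le)
  then have "occurrence (take i \<pi>) p idx"
    using occ(1) occurrence_take_iff[OF p] by blast
  moreover have "i + (idx (?k + j) - i) = idx (?k + j)" if "j \<in> {1..fst q}" for j
    using cross k that unfolding i_def by fastforce
  then have "occurrence (drop i \<pi>) q (\<lambda>j. idx (?k + j) - i)"
    using occ(2) occurrence_cong[OF q, of "\<lambda>j. i + (idx (?k + j) - i)" "\<lambda>j. idx (?k + j)"]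
    unfolding occurrence_drop_iff[OF q] by blast
  ultimately show "\<exists>i\<le>length \<pi>. contains (take i \<pi>) p \<and> contains (drop i \<pi>) q"
    unfolding contains_iff_occurrence by blast
next
  let ?k = "fst p"
  assume "\<exists>i\<le>length \<pi>. contains (take i \<pi>) p \<and> contains (drop i \<pi>) q"
  then obtain i f g where "i \<le> length \<pi>"
    and f: "occurrence (take i \<pi>) p f" and g: "occurrence (drop i \<pi>) q g"
    unfolding contains_iff_occurrence by blast
  define idx where "idx j = (if j \<le> ?k then f j else i + g (j - ?k))" for j
  have "occurrence \<pi> p f" and f_below: "\<forall>j\<in>{1..?k}. f j < i"
    using f occurrence_take_iff[OF p] by blast+
  then have "occurrence \<pi> p idx"
    using occurrence_cong[OF p, of idx f] unfolding idx_def by simp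
  moreover have "occurrence \<pi> q (\<lambda>j. idx (?k + j))"
    using g occurrence_drop_iff[OF q] occurrence_cong[OF q, of "\<lambda>j. idx (?k + j)" "\<lambda>j. i + g j"]
    unfolding idx_def by simp
  moreover have "\<forall>j\<in>{1..?k}. \<forall>m\<in>{1..fst q}. idx j < idx (?k + m)"
    using f_below unfolding idx_def by fastforce
  ultimately show "contains \<pi> (disjoint_sum p q)"
    unfolding contains_iff_occurrence occurrence_disjoint_sum_iff[OF p q] by blast
qed

lemma contains_take_mono:
  assumes "is_POP p" "i \<le> j" "contains (take i \<pi>) p"
  shows "contains (take j \<pi>) p"
proof -
  have "take i \<pi> = take i (take j \<pi>)"
    using \<open>i \<le> j\<close> by (simp add: min_absorb1)
  with assms show ?thesis
    unfolding contains_iff_occurrence by (metis occurrence_take_iff)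
qed

lemma contains_drop_antimono:
  assumes "is_POP p" "i \<le> j" "contains (drop j \<pi>) p"
  shows "contains (drop i \<pi>) p"
proof -
  have "drop j \<pi> = drop (j - i) (drop i \<pi>)"
    using \<open>i \<le> j\<close> by simp
  with assms show ?thesis
    unfolding contains_iff_occurrence by (metis occurrence_drop_iff)
qed

lemma not_contains_Nil: "1 \<le> fst p \<Longrightarrow> \<not> contains [] p"
  unfolding contains_def by auto

section \<open>Counting avoiders of a disjoint sum\<close>

lemma card_avoiding_prefix_suffix:
  assumes p: "is_POP p" and q: "is_POP q" and "i \<le> n"
  shows "card {\<pi> \<in> perms n. \<not> contains (take i \<pi>) p \<and> \<not> contains (drop i \<pi>) q}
       = (n choose i) * card (avoiders i p) * card (avoiders (n - i) q)"
proof -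
  have "card {\<pi> \<in> arrangements {1..n}. \<not> contains (take i \<pi>) p \<and> \<not> contains (drop i \<pi>) q}
      = (card {1..n} choose i) * card {\<sigma> \<in> perms i. \<not> contains \<sigma> p}
          * card {\<tau> \<in> perms (card {1..n} - i). \<not> contains \<tau> q}"
    by (rule card_arrangements_split) (use assms order_invariant_avoid in auto)
  then show ?thesis
    unfolding avoiders_def perms_eq_arrangements by simp
qed

lemma card_avoiding_prefix_gap_suffix:
  assumes p: "is_POP p" and q: "is_POP q" and "i < n"
  shows "card {\<pi> \<in> perms n. \<not> contains (take i \<pi>) p \<and> \<not> contains (drop (Suc i) \<pi>) q}
       = n * ((n - 1) choose i) * card (avoiders i p) * card (avoiders (n - Suc i) q)"
proof -
  let ?A = "card (avoiders i p)" and ?B = "card (avoiders (n - Suc i) q)"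
  have "card {\<pi> \<in> arrangements {1..n}. \<not> contains (take i (take (Suc i) \<pi>)) p \<and> \<not> contains (drop (Suc i) \<pi>) q}
      = (card {1..n} choose Suc i) * card {\<sigma> \<in> perms (Suc i). \<not> contains (take i \<sigma>) p}
          * card {\<tau> \<in> perms (card {1..n} - Suc i). \<not> contains \<tau> q}"
    by (rule card_arrangements_split[where P = "\<lambda>\<sigma>. \<not> contains (take i \<sigma>) p"])
      (use assms order_invariant_avoid order_invariant_take[OF order_invariant_avoid[OF p]] in auto)
  then have "card {\<pi> \<in> perms n. \<not> contains (take i \<pi>) p \<and> \<not> contains (drop (Suc i) \<pi>) q}
      = (n choose Suc i) * (Suc i * ?A) * ?B"
    using card_perms_take[OF order_invariant_avoid[OF p], of i]
    unfolding avoiders_def perms_eq_arrangements by (simp add: min_absorb1)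
  also have "\<dots> = (Suc i * (n choose Suc i)) * ?A * ?B"
    by (simp only: mult_ac)
  also have "Suc i * (n choose Suc i) = n * ((n - 1) choose i)"
    using \<open>i < n\<close> Suc_times_binomial[of i "n - 1"] by simp
  finally show ?thesis .
qed

lemma of_bool_avoid_disjoint_sum:
  assumes p: "is_POP p" and q: "is_POP q" and k: "1 \<le> fst p" and l: "1 \<le> fst q"
    and "length \<pi> = n"
  shows "(of_bool (\<not> contains \<pi> (disjoint_sum p q)) :: nat)
      + (\<Sum>i\<le>n. of_bool (\<not> contains (take i \<pi>) p \<and> \<not> contains (drop i \<pi>) q))
    = of_bool (\<not> contains \<pi> p) + of_bool (\<not> contains \<pi> q)
      + (\<Sum>i<n. of_bool (\<not> contains (take i \<pi>) p \<and> \<not> contains (drop (Suc i) \<pi>) q))"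
proof -
  have "\<not> contains (take 0 \<pi>) p" "\<not> contains (drop n \<pi>) q"
    using not_contains_Nil[OF k] not_contains_Nil[OF l] \<open>length \<pi> = n\<close> by simp_all
  from of_bool_up_down_disjoint[where P = "\<lambda>i. contains (take i \<pi>) p" and Q = "\<lambda>i. contains (drop i \<pi>) q",
      OF contains_take_mono[OF p] contains_drop_antimono[OF q] this]
  show ?thesis
    using contains_disjoint_sum_iff[OF p q k, of \<pi>] \<open>length \<pi> = n\<close> by simp
qed

lemma card_avoiders_disjoint_sum:
  assumes p: "is_POP p" and q: "is_POP q" and k: "1 \<le> fst p" and l: "1 \<le> fst q"
  defines "a \<equiv> \<lambda>m. card (avoiders m p)" and "b \<equiv> \<lambda>m. card (avoiders m q)"
  shows "card (avoiders n (disjoint_sum p q)) + binomial_convolution a b n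
       = a n + b n + n * binomial_convolution a b (n - 1)"
proof -
  have finite: "finite (perms n)"
    unfolding perms_eq_arrangements by (simp add: finite_arrangements)
  have count: "(\<Sum>\<pi>\<in>perms n. of_bool (R \<pi>)) = card {\<pi> \<in> perms n. R \<pi>}" for R
    using finite by (simp add: Int_def)
  have "(\<Sum>\<pi>\<in>perms n. (of_bool (\<not> contains \<pi> (disjoint_sum p q)) :: nat)
      + (\<Sum>i\<le>n. of_bool (\<not> contains (take i \<pi>) p \<and> \<not> contains (drop i \<pi>) q)))
    = (\<Sum>\<pi>\<in>perms n. of_bool (\<not> contains \<pi> p) + of_bool (\<not> contains \<pi> q)
      + (\<Sum>i<n. of_bool (\<not> contains (take i \<pi>) p \<and> \<not> contains (drop (Suc i) \<pi>) q)))"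
    by (intro sum.cong refl of_bool_avoid_disjoint_sum[OF p q k l])
      (simp add: perms_eq_arrangements length_arrangement)
  then have "card (avoiders n (disjoint_sum p q))
      + (\<Sum>i\<le>n. card {\<pi> \<in> perms n. \<not> contains (take i \<pi>) p \<and> \<not> contains (drop i \<pi>) q})
    = a n + b n
      + (\<Sum>i<n. card {\<pi> \<in> perms n. \<not> contains (take i \<pi>) p \<and> \<not> contains (drop (Suc i) \<pi>) q})"
    unfolding a_def b_def avoiders_def sum.distrib sum.swap[where A = "perms n"] count .
  moreover have "(\<Sum>i\<le>n. card {\<pi> \<in> perms n. \<not> contains (take i \<pi>) p \<and> \<not> contains (drop i \<pi>) q})
      = binomial_convolution a b n"
    unfolding binomial_convolution_def a_def b_def
    by (intro sum.cong) (simp_all add: card_avoiding_prefix_suffix[OF p q])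
  moreover have "(\<Sum>i<n. card {\<pi> \<in> perms n. \<not> contains (take i \<pi>) p \<and> \<not> contains (drop (Suc i) \<pi>) q})
      = n * binomial_convolution a b (n - 1)"
  proof (cases n)
    case (Suc m)
    then show ?thesis
      unfolding binomial_convolution_def a_def b_def sum_distrib_left lessThan_Suc_atMost[symmetric]
      by (intro sum.cong) (simp_all add: card_avoiding_prefix_gap_suffix[OF p q] algebra_simps)
  qed simp
  ultimately show ?thesis by simp
qed

lemma disjoint_sum_commute_if_empty:
  assumes "is_POP p" "fst p = 0"
  shows "disjoint_sum p q = disjoint_sum q p"
proof -
  have "snd p = {}" using assms unfolding is_POP_def by auto
  with assms show ?thesis unfolding disjoint_sum_def by simp
qed

theorem theorem1p5:
  assumes "is_POP p" and "is_POP q"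
  shows "wilf_equiv (disjoint_sum p q) (disjoint_sum q p)"
proof (cases "fst p = 0 \<or> fst q = 0")
  case True
  then have "disjoint_sum p q = disjoint_sum q p"
    using disjoint_sum_commute_if_empty assms by metis
  then show ?thesis unfolding wilf_equiv_def by simp
next
  case False
  then have k: "1 \<le> fst p" and l: "1 \<le> fst q" by auto
  show ?thesis
    unfolding wilf_equiv_def
  proof (intro allI impI)
    fix n :: nat
    let ?a = "\<lambda>m. card (avoiders m p)" and ?b = "\<lambda>m. card (avoiders m q)"
    have "card (avoiders n (disjoint_sum p q)) + binomial_convolution ?a ?b n
        = ?a n + ?b n + n * binomial_convolution ?a ?b (n - 1)"
      by (rule card_avoiders_disjoint_sum[OF assms k l])
    moreover have "card (avoiders n (disjoint_sum q p)) + binomial_convolution ?b ?a n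
        = ?b n + ?a n + n * binomial_convolution ?b ?a (n - 1)"
      by (rule card_avoiders_disjoint_sum[OF assms(2,1) l k])
    ultimately show "card (avoiders n (disjoint_sum p q)) = card (avoiders n (disjoint_sum q p))"
      using binomial_convolution_commute[of ?b ?a] by simp
  qed
qed

end
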